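(* Let $\eta$ be a nonnegative integer valued random variable with $P(\eta=0)<1$ and let $(p_n)$ be a sequence in $(0,1]$ with $\lim_{n\to\infty}p_n=1$. Consider the auxiliary process on the complete graph $\mathcal{K}_{n+1}$ with survival parameter $p_n$, in which the $\eta_v$ are i.i.d. with the distribution of $\eta$. Then for every $c\in(0,1)$, \[\lim_{n\to\infty}P\big(R(\mathcal{K}_{n+1},p_n)<k_1\big)=0,\qquad\text{where }k_1=k_1(n)=\lfloor cn\rfloor-1.\]
   Context: Auxiliary process on a connected graph $\mathcal{G}=(\mathcal{V},\mathcal{E})$ (here the complete graph $\mathcal{K}_{n+1}$ on $n+1$ vertices, in which a step goes to a uniformly chosen vertex other than the current one) with root $o$ and survival parameter $p$: each $v\neq o$ initially carries $\eta_v$ inactive particles and $o$ carries $1+\eta_o$ active particles (the original particles). At each round $k=1,2,\dots$ exactly one active particle is chosen (by an arbitrary rule) to participate; independently of everything else it survives with probability $p$, in which case it moves to a uniformly chosen neighbouring vertex and activates all inactive particles there, and otherwise it dies and is removed. When the last living original active particle dies, all remaining inactive particles are called extra and a new extra active particle is injected at $o$; afterwards, each time the only living active particle dies, a new extra active particle is injected at $o$. For round $k$ define $X_k=0$ if the participating particle dies; $X_k=1$ if it survives and moves to a previously visited vertex or to a never-visited vertex $v$ with $\eta_v=0$; $X_k=j\geq2$ if it survives and moves to a never-visited vertex $v$ with $\eta_v=j-1$. Set $A'_0=1+\eta_o$, $A'_k=1+\eta_o+\sum_{j=1}^k(X_j-1)$, and $R=R(\mathcal{G},p)=\inf\{k:A'_k=0\}$.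 *)

theory Defs
  imports "HOL-Probability.Probability" "HOL-Library.Multiset"
begin

text \<open>Auxiliary process on the complete graph K_{n+1}, vertex set {0..n}, root o = 0.
  A state is (multiset of positions of living active original particles, set of visited vertices).
  The vector eta :: nat => nat gives the number of initial particles at each vertex
  (at the root: eta 0 extra active particles besides the one original).
  A rule chooses, in round k and state s, the position of the participating active particle.\<close>

type_synonym aux_state = "nat multiset \<times> nat set"

definition aux_init :: "(nat \<Rightarrow> nat) \<Rightarrow> aux_state" where
  "aux_init \<eta> = (replicate_mset (1 + \<eta> 0) 0, {0})"

definition aux_step :: "real \<Rightarrow> nat \<Rightarrow> (nat \<Rightarrow> nat) \<Rightarrow> nat \<Rightarrow> aux_state \<Rightarrow> (aux_state \<times> nat) pmf" where
  "aux_step p n \<eta> u s = do {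
     b \<leftarrow> bernoulli_pmf p;
     if \<not> b then return_pmf ((fst s - {#u#}, snd s), 0)
     else do {
       v \<leftarrow> pmf_of_set ({..n} - {u});
       let new = (if v \<in> snd s then 0 else \<eta> v);
       return_pmf ((fst s - {#u#} + replicate_mset (1 + new) v, insert v (snd s)), 1 + new)
     }
   }"

text \<open>Trajectory of the X-values for at most m rounds starting at round i+1; the record is
  stopped once no original active particle is alive (i.e. at time R); the later evolution
  (extra particles) is irrelevant for R.\<close>
fun aux_traj :: "real \<Rightarrow> nat \<Rightarrow> (nat \<Rightarrow> aux_state \<Rightarrow> nat) \<Rightarrow> (nat \<Rightarrow> nat) \<Rightarrow> nat \<Rightarrow> nat \<Rightarrow> aux_state \<Rightarrow> nat list pmf" where
  "aux_traj p n rule \<eta> i 0 s = return_pmf []"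
| "aux_traj p n rule \<eta> i (Suc m) s =
     (if fst s = {#} then return_pmf []
      else do {
        (s', x) \<leftarrow> aux_step p n \<eta> (rule i s) s;
        xs \<leftarrow> aux_traj p n rule \<eta> (Suc i) m s';
        return_pmf (x # xs)
      })"

text \<open>A'_k = 1 + eta_o + sum_{j=1}^k (X_j - 1), with xs ! (j-1) = X_j.\<close>
definition Aprime :: "(nat \<Rightarrow> nat) \<Rightarrow> nat list \<Rightarrow> nat \<Rightarrow> int" where
  "Aprime \<eta> xs k = int (1 + \<eta> 0) + (\<Sum>j<k. int (xs ! j) - 1)"

definition aux_law :: "nat pmf \<Rightarrow> real \<Rightarrow> (nat \<Rightarrow> aux_state \<Rightarrow> nat) \<Rightarrow> nat \<Rightarrow> nat \<Rightarrow> ((nat \<Rightarrow> nat) \<times> nat list) pmf" where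
  "aux_law eta p rule n m =
     Pi_pmf {..n} 0 (\<lambda>_. eta) \<bind> (\<lambda>\<eta>. map_pmf (\<lambda>xs. (\<eta>, xs)) (aux_traj p n rule \<eta> 0 m (aux_init \<eta>)))"

text \<open>P(R(K_{n+1},p) < K), R = inf{k. A'_k = 0}; for k < K only X_1..X_{K-1} matter.\<close>
definition prob_R_less :: "nat pmf \<Rightarrow> real \<Rightarrow> (nat \<Rightarrow> aux_state \<Rightarrow> nat) \<Rightarrow> nat \<Rightarrow> int \<Rightarrow> real" where
  "prob_R_less eta p rule n K =
     measure_pmf.prob (aux_law eta p rule n (nat K))
       {(\<eta>, xs). \<exists>k. int k < K \<and> k \<le> length xs \<and> Aprime \<eta> xs k = 0}"

end

theory Submission
  imports Defs
begin

(* While an original particle is alive, A'_k stays positive, so R < K forces all original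
   particles to die within the first K - 1 rounds.  Let q = P(eta > 0) and theta = 1 - c.  During
   the first K - 1 < c n rounds at least theta n of the n possible targets of a jump are unvisited,
   and an unvisited target adds a fresh particle with probability q.  Hence if
   (1 - p) + p r (1 - theta q (1 - r)) <= r, then r^a, with a the number of living original
   particles, bounds the probability of extinction within the remaining rounds: this is checked
   one round at a time, averaging over the counts at the still unvisited vertices.  As p_n -> 1,
   every r in (0, 1) satisfies the condition for large n, so P(R < K) <= r eventually. *)

lemma nn_integral_Pi_pmf_reveal:
  assumes "finite A" "v \<in> A" "v \<notin> V"
  shows "(\<integral>\<^sup>+h. F (override_on h g V) (h v) \<partial>Pi_pmf (A - V) d P) =
    (\<integral>\<^sup>+y. \<integral>\<^sup>+h. F (override_on h (g(v := y)) (insert v V)) y \<partial>Pi_pmf (A - insert v V) d P \<partial>P v)"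
proof -
  have "A - V = insert v (A - insert v V)"
    using assms(2,3) by blast
  then have "Pi_pmf (A - V) d P = map_pmf (\<lambda>(y, f). f(v := y)) (pair_pmf (P v) (Pi_pmf (A - insert v V) d P))"
    using assms(1) by (metis Diff_iff Pi_pmf_insert finite_Diff insertI1)
  moreover have "override_on (h(v := y)) g V = override_on h (g(v := y)) (insert v V)" for h y
    using assms(3) by (auto simp: override_on_def)
  ultimately show ?thesis
    by (simp add: nn_integral_pair_pmf' case_prod_unfold)
qed

lemma nn_integral_le_power_shift:
  fixes P :: "nat pmf" and r :: real
  assumes r: "0 \<le> r" "r \<le> 1" and f: "\<And>y. f y \<le> ennreal (r ^ (a + y))"
  shows "(\<integral>\<^sup>+y. f y \<partial>P) \<le> ennreal (r ^ a * (1 - (1 - pmf P 0) * (1 - r)))"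
proof -
  have "ennreal (r ^ (a + y)) \<le> ennreal (r ^ a * r) + ennreal (r ^ a * (1 - r)) * indicator {0} y" for y
  proof (cases "y = 0")
    case False
    then have "r ^ y \<le> r ^ 1"
      using r by (intro power_decreasing) auto
    then have "r ^ (a + y) \<le> r ^ a * r"
      using r by (simp add: power_add mult_left_mono)
    then show ?thesis
      using False by (simp add: ennreal_leI)
  next
    case True
    have "0 \<le> r ^ a * r" "0 \<le> r ^ a * (1 - r)"
      using r by simp_all
    then show ?thesis
      using True by (simp add: ennreal_plus[symmetric] algebra_simps del: ennreal_plus)
  qed
  then have "(\<integral>\<^sup>+y. f y \<partial>P) \<le> (\<integral>\<^sup>+y. ennreal (r ^ a * r) + ennreal (r ^ a * (1 - r)) * indicator {0} y \<partial>P)"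
    using f order_trans by (intro nn_integral_mono) blast
  also have "\<dots> = ennreal (r ^ a * r + r ^ a * (1 - r) * pmf P 0)"
    using r by (simp add: nn_integral_add nn_integral_cmult_indicator emeasure_pmf_single
        ennreal_mult[symmetric] ennreal_plus[symmetric] del: ennreal_plus)
  also have "r ^ a * r + r ^ a * (1 - r) * pmf P 0 = r ^ a * (1 - (1 - pmf P 0) * (1 - r))"
    by (simp add: algebra_simps)
  finally show ?thesis .
qed

lemma sum_visited_unvisited_le:
  fixes T :: "nat \<Rightarrow> ennreal" and x d \<theta> :: real
  assumes "u \<in> V" "V \<subseteq> {..n}" "\<theta> * n \<le> real (n + 1) - card V" "0 \<le> d" "d \<le> x"
    and T: "\<And>v. v \<le> n \<Longrightarrow> T v \<le> ennreal (if v \<in> V then x else x - d)"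
  shows "(\<Sum>v\<in>{..n}-{u}. T v) \<le> ennreal (n * x - \<theta> * n * d)"
proof -
  have "finite V"
    using assms(2) finite_subset by blast
  have "(\<Sum>v\<in>{..n}-{u}. x - d * of_bool (v \<notin> V)) = n * x - d * card ({..n} - V)"
  proof -
    have "card ({..n} - {u}) = n"
      using assms(1,2) by auto
    moreover have "({..n} - {u}) \<inter> {v. v \<notin> V} = {..n} - V"
      using assms(1) by blast
    ultimately show ?thesis
      by (simp add: sum_subtractf sum_distrib_left[symmetric])
  qed
  also have "card ({..n} - V) = n + 1 - card V"
    using assms(2) \<open>finite V\<close> by (simp add: card_Diff_subset)
  also have "n * x - d * (n + 1 - card V) \<le> n * x - \<theta> * n * d"
    using assms(2-4) card_mono[OF _ assms(2)] by (simp add: of_nat_diff mult.commute mult_left_mono)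
  finally have count: "(\<Sum>v\<in>{..n}-{u}. x - d * of_bool (v \<notin> V)) \<le> n * x - \<theta> * n * d" .
  have "(\<Sum>v\<in>{..n}-{u}. T v) \<le> (\<Sum>v\<in>{..n}-{u}. ennreal (x - d * of_bool (v \<notin> V)))"
  proof (rule sum_mono)
    fix v
    assume "v \<in> {..n} - {u}"
    then show "T v \<le> ennreal (x - d * of_bool (v \<notin> V))"
      using T[of v] by (cases "v \<in> V") simp_all
  qed
  also have "\<dots> = ennreal (\<Sum>v\<in>{..n}-{u}. x - d * of_bool (v \<notin> V))"
    using assms(4,5) by (intro sum_ennreal) auto
  also have "\<dots> \<le> ennreal (n * x - \<theta> * n * d)"
    using count by (rule ennreal_leI)
  finally show ?thesis .
qed

lemma averaged_step_le:
  fixes S D :: ennreal and n :: nat and p q r \<theta> :: real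
  assumes n: "1 \<le> n" and p: "0 \<le> p" "p \<le> 1" and r: "0 \<le> r" "r \<le> 1" and q: "0 \<le> q" "q \<le> 1"
    and \<theta>: "0 \<le> \<theta>" "\<theta> \<le> 1" and a: "1 \<le> a"
    and key: "(1 - p) + p * r * (1 - \<theta> * q * (1 - r)) \<le> r"
    and S: "S \<le> ennreal (n * r ^ a - \<theta> * n * (r ^ a * q * (1 - r)))"
    and D: "D \<le> ennreal (r ^ (a - 1))"
  shows "ennreal p * (S / n) + ennreal (1 - p) * D \<le> ennreal (r ^ a)"
proof -
  define t where "t = r ^ (a - 1)"
  have ra: "r ^ a = r * t"
    using a by (simp add: t_def power_eq_if)
  have "\<theta> * (q * (1 - r)) \<le> 1 * 1"
    using \<theta> q r by (intro mult_mono mult_le_one) auto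
  then have nonneg: "0 \<le> r ^ a - \<theta> * (r ^ a * q * (1 - r))"
    using r mult_left_mono[of "\<theta> * (q * (1 - r))" 1 "r ^ a"] by (simp add: algebra_simps)
  have "S / n \<le> ennreal (n * (r ^ a - \<theta> * (r ^ a * q * (1 - r)))) / ennreal n"
    using S by (simp add: algebra_simps ennreal_of_nat_eq_real_of_nat divide_right_mono_ennreal)
  also have "\<dots> = ennreal (r ^ a - \<theta> * (r ^ a * q * (1 - r)))"
    using n nonneg by (simp add: divide_ennreal)
  finally have "ennreal p * (S / n) + ennreal (1 - p) * D
      \<le> ennreal p * ennreal (r ^ a - \<theta> * (r ^ a * q * (1 - r))) + ennreal (1 - p) * ennreal t"
    using D unfolding t_def by (intro add_mono mult_left_mono) auto
  also have "\<dots> = ennreal (p * (r ^ a - \<theta> * (r ^ a * q * (1 - r))) + (1 - p) * t)"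
    using p r nonneg by (simp add: t_def ennreal_mult[symmetric] ennreal_plus[symmetric] del: ennreal_plus)
  also have "p * (r ^ a - \<theta> * (r ^ a * q * (1 - r))) + (1 - p) * t = t * ((1 - p) + p * r * (1 - \<theta> * q * (1 - r)))"
    by (simp add: ra algebra_simps)
  also have "\<dots> \<le> ennreal (t * r)"
    using mult_left_mono[OF key, of t] r by (intro ennreal_leI) (simp add: t_def)
  finally show ?thesis
    by (simp add: ra mult.commute)
qed

lemma aux_step_size:
  assumes "z \<in> set_pmf (aux_step p n \<eta> u s)" "u \<in># fst s"
  shows "size (fst (fst z)) + 1 = size (fst s) + snd z"
proof -
  have "size (fst s - {#u#}) + 1 = size (fst s)"
    using assms(2) by (metis Suc_eq_plus1 insert_DiffM size_add_mset)
  with assms(1) show ?thesis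
    unfolding aux_step_def by (auto simp: Let_def split: if_splits)
qed

lemma aux_traj_running_count_pos:
  assumes rule: "\<forall>k s. fst s \<noteq> {#} \<longrightarrow> rule k s \<in># fst s"
  shows "xs \<in> set_pmf (aux_traj p n rule \<eta> i m s) \<Longrightarrow> k < length xs \<Longrightarrow>
    0 < int (size (fst s)) + (\<Sum>j<k. int (xs ! j) - 1)"
proof (induction m arbitrary: i s xs k)
  case 0
  then show ?case by simp
next
  case (Suc m)
  then have "fst s \<noteq> {#}"
    by (auto split: if_splits)
  with Suc.prems obtain z xs' where z: "z \<in> set_pmf (aux_step p n \<eta> (rule i s) s)"
    and xs': "xs' \<in> set_pmf (aux_traj p n rule \<eta> (Suc i) m (fst z))" and xs: "xs = snd z # xs'"
    by (auto simp: case_prod_unfold)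
  have size_z: "size (fst (fst z)) + 1 = size (fst s) + snd z"
    using aux_step_size[OF z] rule \<open>fst s \<noteq> {#}\<close> by auto
  show ?case
  proof (cases k)
    case 0
    then show ?thesis using \<open>fst s \<noteq> {#}\<close> by (simp add: nonempty_has_size)
  next
    case (Suc k')
    then have "0 < int (size (fst (fst z))) + (\<Sum>j<k'. int (xs' ! j) - 1)"
      using Suc.IH[OF xs'] Suc.prems(2) xs by simp
    moreover have "(\<Sum>j<k. int (xs ! j) - 1) = (int (snd z) - 1) + (\<Sum>j<k'. int (xs' ! j) - 1)"
      unfolding Suc xs by (subst sum.lessThan_Suc_shift) simp
    ultimately show ?thesis using size_z by linarith
  qed
qed

lemma Aprime_pos_before_length:
  assumes "\<forall>k s. fst s \<noteq> {#} \<longrightarrow> rule k s \<in># fst s"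
    and "xs \<in> set_pmf (aux_traj p n rule \<eta> 0 m (aux_init \<eta>))" and "k < length xs"
  shows "0 < Aprime \<eta> xs k"
  using aux_traj_running_count_pos[OF assms] by (simp add: Aprime_def aux_init_def)

lemma emeasure_aux_traj_Suc_short:
  assumes "fst s \<noteq> {#}"
  shows "emeasure (aux_traj p n rule \<eta> i (Suc m) s) {xs. length xs < Suc m} =
    (\<integral>\<^sup>+z. emeasure (aux_traj p n rule \<eta> (Suc i) m (fst z)) {xs. length xs < m} \<partial>aux_step p n \<eta> (rule i s) s)"
  using assms by (simp add: case_prod_unfold nn_integral_indicator[symmetric] indicator_def)

lemma nn_integral_aux_step:
  assumes "u \<le> n" "1 \<le> n" "0 \<le> p" "p \<le> 1"
  shows "(\<integral>\<^sup>+z. G z \<partial>aux_step p n \<eta> u (M, V)) =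
    ennreal p * ((\<Sum>v\<in>{..n}-{u}. G ((M - {#u#} + replicate_mset (Suc (if v \<in> V then 0 else \<eta> v)) v,
        insert v V), Suc (if v \<in> V then 0 else \<eta> v))) / n)
    + ennreal (1 - p) * G ((M - {#u#}, V), 0)"
proof -
  have "finite ({..n} - {u})" "{..n} - {u} \<noteq> {}" "card ({..n} - {u}) = n"
    using assms by auto
  with assms show ?thesis
    unfolding aux_step_def by (simp add: Let_def nn_integral_pmf_of_set mult.commute)
qed

(* Probability that all original particles die within m rounds from state s, given the counts g
   already revealed at the visited vertices snd s; the counts at unvisited vertices are still
   fresh and are integrated out. *)
definition extinction_prob ::
    "nat pmf \<Rightarrow> real \<Rightarrow> nat \<Rightarrow> (nat \<Rightarrow> aux_state \<Rightarrow> nat) \<Rightarrow> (nat \<Rightarrow> nat) \<Rightarrow> nat \<Rightarrow> nat \<Rightarrow> aux_state \<Rightarrow> ennreal"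
  where "extinction_prob eta p n rule g i m s =
    (\<integral>\<^sup>+h. emeasure (aux_traj p n rule (override_on h g (snd s)) i m s) {xs. length xs < m}
      \<partial>Pi_pmf ({..n} - snd s) 0 (\<lambda>_. eta))"

lemma extinction_prob_Suc:
  assumes n: "1 \<le> n" and p: "0 \<le> p" "p \<le> 1" and M: "M \<noteq> {#}"
    and u: "u = rule i (M, V)" "u \<in> V" and V: "V \<subseteq> {..n}"
  shows "extinction_prob eta p n rule g i (Suc m) (M, V) =
    ennreal p * ((\<Sum>v\<in>{..n}-{u}.
        if v \<in> V then extinction_prob eta p n rule g (Suc i) m (M - {#u#} + {#v#}, V)
        else \<integral>\<^sup>+y. extinction_prob eta p n rule (g(v := y)) (Suc i) m
               (M - {#u#} + replicate_mset (Suc y) v, insert v V) \<partial>eta) / n)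
    + ennreal (1 - p) * extinction_prob eta p n rule g (Suc i) m (M - {#u#}, V)"
proof -
  let ?E = "\<lambda>\<eta> s. emeasure (aux_traj p n rule \<eta> (Suc i) m s) {xs. length xs < m}"
  let ?P = "\<lambda>V. measure_pmf (Pi_pmf ({..n} - V) 0 (\<lambda>_. eta))"
  define G where "G v h = ?E (override_on h g V)
    (M - {#u#} + replicate_mset (Suc (if v \<in> V then 0 else h v)) v, insert v V)" for v h
  have "u \<le> n"
    using u V by auto
  then have "emeasure (aux_traj p n rule (override_on h g V) i (Suc m) (M, V)) {xs. length xs < Suc m} =
      ennreal p * ((\<Sum>v\<in>{..n}-{u}. G v h) / n) + ennreal (1 - p) * ?E (override_on h g V) (M - {#u#}, V)" for h
    using n p M unfolding G_def u(1)
    by (subst emeasure_aux_traj_Suc_short) (simp_all add: nn_integral_aux_step cong: if_cong)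
  then have unfolded: "extinction_prob eta p n rule g i (Suc m) (M, V) =
      ennreal p * ((\<Sum>v\<in>{..n}-{u}. \<integral>\<^sup>+h. G v h \<partial>?P V) / n)
      + ennreal (1 - p) * extinction_prob eta p n rule g (Suc i) m (M - {#u#}, V)"
    by (simp add: extinction_prob_def nn_integral_add nn_integral_cmult nn_integral_divide nn_integral_sum)
  have visited: "(\<integral>\<^sup>+h. G v h \<partial>?P V) = extinction_prob eta p n rule g (Suc i) m (M - {#u#} + {#v#}, V)"
    if "v \<in> V" for v
    using that by (simp add: G_def extinction_prob_def insert_absorb)
  have unvisited: "(\<integral>\<^sup>+h. G v h \<partial>?P V) = (\<integral>\<^sup>+y. extinction_prob eta p n rule (g(v := y)) (Suc i) m
      (M - {#u#} + replicate_mset (Suc y) v, insert v V) \<partial>eta)"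
    if "v \<notin> V" "v \<le> n" for v
    using that nn_integral_Pi_pmf_reveal[where A = "{..n}" and v = v and V = V and g = g
        and F = "\<lambda>\<eta> y. ?E \<eta> (M - {#u#} + replicate_mset (Suc y) v, insert v V)"]
    by (simp add: G_def extinction_prob_def)
  have "(\<Sum>v\<in>{..n}-{u}. \<integral>\<^sup>+h. G v h \<partial>?P V) = (\<Sum>v\<in>{..n}-{u}.
      if v \<in> V then extinction_prob eta p n rule g (Suc i) m (M - {#u#} + {#v#}, V)
      else \<integral>\<^sup>+y. extinction_prob eta p n rule (g(v := y)) (Suc i) m
             (M - {#u#} + replicate_mset (Suc y) v, insert v V) \<partial>eta)"
    by (rule sum.cong) (simp_all add: visited unvisited)
  with unfolded show ?thesis
    by simp
qed

lemma extinction_prob_jump_le: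
  fixes eta :: "nat pmf" and n m :: nat and r \<theta> :: real
  assumes r: "0 \<le> r" "r \<le> 1"
    and bound: "\<And>g i M V. set_mset M \<subseteq> V \<Longrightarrow> V \<subseteq> {..n} \<Longrightarrow> \<theta> * n + m \<le> real (n + 1) - card V \<Longrightarrow>
      extinction_prob eta p n rule g i m (M, V) \<le> r ^ size M"
    and M: "set_mset M \<subseteq> V" and V: "V \<subseteq> {..n}" "\<theta> * n + Suc m \<le> real (n + 1) - card V"
    and v: "v \<le> n"
  shows "(if v \<in> V then extinction_prob eta p n rule g i m (M + {#v#}, V)
      else \<integral>\<^sup>+y. extinction_prob eta p n rule (g(v := y)) i m (M + replicate_mset (Suc y) v, insert v V) \<partial>eta)
    \<le> ennreal (if v \<in> V then r ^ Suc (size M) else r ^ Suc (size M) - r ^ Suc (size M) * (1 - pmf eta 0) * (1 - r))"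
proof (cases "v \<in> V")
  case True
  then show ?thesis
    using bound[where M = "M + {#v#}" and V = V and g = g and i = i] M V by simp
next
  case False
  have "(\<integral>\<^sup>+y. extinction_prob eta p n rule (g(v := y)) i m (M + replicate_mset (Suc y) v, insert v V) \<partial>eta)
      \<le> ennreal (r ^ Suc (size M) * (1 - (1 - pmf eta 0) * (1 - r)))"
  proof (rule nn_integral_le_power_shift[OF r])
    fix y
    have "card (insert v V) = Suc (card V)"
      using V(1) False finite_subset by fastforce
    then have "extinction_prob eta p n rule (g(v := y)) i m (M + replicate_mset (Suc y) v, insert v V)
        \<le> r ^ size (M + replicate_mset (Suc y) v)"
      using M V v by (intro bound) auto
    then show "extinction_prob eta p n rule (g(v := y)) i m (M + replicate_mset (Suc y) v, insert v V)
        \<le> ennreal (r ^ (Suc (size M) + y))"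
      by simp
  qed
  also have "r ^ Suc (size M) * (1 - (1 - pmf eta 0) * (1 - r))
      = r ^ Suc (size M) - r ^ Suc (size M) * (1 - pmf eta 0) * (1 - r)"
    by (simp add: algebra_simps)
  finally show ?thesis
    using False by (simp add: fun_upd_def)
qed

lemma extinction_prob_le:
  fixes r \<theta> :: real
  assumes n: "1 \<le> n" and p: "0 \<le> p" "p \<le> 1" and r: "0 \<le> r" "r \<le> 1" and \<theta>: "0 \<le> \<theta>" "\<theta> \<le> 1"
    and key: "(1 - p) + p * r * (1 - \<theta> * (1 - pmf eta 0) * (1 - r)) \<le> r"
    and rule: "\<forall>k s. fst s \<noteq> {#} \<longrightarrow> rule k s \<in># fst s"
  shows "set_mset M \<subseteq> V \<Longrightarrow> V \<subseteq> {..n} \<Longrightarrow> \<theta> * n + m \<le> real (n + 1) - card V \<Longrightarrow>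
    extinction_prob eta p n rule g i m (M, V) \<le> r ^ size M"
proof (induction m arbitrary: i M V g)
  case 0
  then show ?case by (simp add: extinction_prob_def)
next
  case (Suc m)
  show ?case
  proof (cases "M = {#}")
    case True
    then show ?thesis by (simp add: extinction_prob_def)
  next
    case False
    define u where "u = rule i (M, V)"
    have "u \<in># M"
      using rule False unfolding u_def by auto
    then have "u \<in> V"
      using Suc.prems(1) by auto
    have size_Mu: "Suc (size (M - {#u#})) = size M"
      using \<open>u \<in># M\<close> by (metis insert_DiffM size_add_mset)
    have Mu_V: "set_mset (M - {#u#}) \<subseteq> V"
      using Suc.prems(1) by (auto dest: in_diffD)
    have q: "0 \<le> 1 - pmf eta 0" "1 - pmf eta 0 \<le> 1"
      by (simp_all add: pmf_le_1)
    have few_visited: "\<theta> * n \<le> real (n + 1) - card V"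
      using Suc.prems(3) by simp
    have d: "0 \<le> r ^ size M * (1 - pmf eta 0) * (1 - r)" "r ^ size M * (1 - pmf eta 0) * (1 - r) \<le> r ^ size M"
      using q r by (simp_all add: mult.assoc mult_left_le mult_le_one)
    note jumps = sum_visited_unvisited_le[OF \<open>u \<in> V\<close> Suc.prems(2) few_visited d
        extinction_prob_jump_le[OF r Suc.IH Mu_V Suc.prems(2,3), unfolded size_Mu]]
    have dead: "extinction_prob eta p n rule g (Suc i) m (M - {#u#}, V) \<le> ennreal (r ^ (size M - 1))"
      using Suc.IH[where M = "M - {#u#}" and V = V and g = g and i = "Suc i"] Suc.prems Mu_V
      by (simp flip: size_Mu)
    show ?thesis
      unfolding extinction_prob_Suc[where rule = rule and i = i and M = M and V = V,
          OF n p False u_def \<open>u \<in> V\<close> Suc.prems(2)]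
      by (rule averaged_step_le[OF n p r q \<theta> _ key jumps dead]) (use size_Mu in linarith)
  qed
qed

lemma prob_R_less_le_short:
  assumes rule: "\<forall>k s. fst s \<noteq> {#} \<longrightarrow> rule k s \<in># fst s"
  shows "prob_R_less eta p rule n K \<le> measure (aux_law eta p rule n (nat K)) {(\<eta>, xs). length xs < nat K}"
  unfolding prob_R_less_def
proof (rule measure_pmf.finite_measure_mono_AE)
  show "AE z in aux_law eta p rule n (nat K).
      z \<in> {(\<eta>, xs). \<exists>k. int k < K \<and> k \<le> length xs \<and> Aprime \<eta> xs k = 0} \<longrightarrow>
      z \<in> {(\<eta>, xs). length xs < nat K}"
    unfolding AE_measure_pmf_iff
  proof (intro ballI impI)
    fix z
    assume "z \<in> set_pmf (aux_law eta p rule n (nat K))"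
      and "z \<in> {(\<eta>, xs). \<exists>k. int k < K \<and> k \<le> length xs \<and> Aprime \<eta> xs k = 0}"
    then obtain \<eta> xs k where z: "z = (\<eta>, xs)" and "xs \<in> set_pmf (aux_traj p n rule \<eta> 0 (nat K) (aux_init \<eta>))"
      and k: "int k < K" "k \<le> length xs" "Aprime \<eta> xs k = 0"
      unfolding aux_law_def by auto
    then have "\<not> k < length xs"
      using Aprime_pos_before_length[OF rule] by fastforce
    with k z show "z \<in> {(\<eta>, xs). length xs < nat K}"
      by simp
  qed
qed simp

lemma emeasure_aux_law_short:
  "emeasure (aux_law eta p rule n m) {(\<eta>, xs). length xs < m} =
    (\<integral>\<^sup>+y. extinction_prob eta p n rule ((\<lambda>_. 0)(0 := y)) 0 m (replicate_mset (Suc y) 0, {0}) \<partial>eta)"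
proof -
  let ?F = "\<lambda>\<eta> y. emeasure (aux_traj p n rule \<eta> 0 m (replicate_mset (Suc y) 0, {0})) {xs. length xs < m}"
  have "emeasure (aux_law eta p rule n m) {(\<eta>, xs). length xs < m} =
      (\<integral>\<^sup>+h. ?F (override_on h (\<lambda>_. 0) {}) (h 0) \<partial>Pi_pmf ({..n} - {}) 0 (\<lambda>_. eta))"
    unfolding aux_law_def by (simp add: vimage_def aux_init_def)
  also have "\<dots> = (\<integral>\<^sup>+y. extinction_prob eta p n rule ((\<lambda>_. 0)(0 := y)) 0 m
      (replicate_mset (Suc y) 0, {0}) \<partial>eta)"
    using nn_integral_Pi_pmf_reveal[where A = "{..n}" and v = 0 and V = "{}" and F = ?F and g = "\<lambda>_. 0"]
    by (simp add: extinction_prob_def)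
  finally show ?thesis .
qed

lemma prob_R_less_le:
  fixes r c :: real
  assumes n: "1 \<le> n" and p: "0 \<le> p" "p \<le> 1" and r: "0 \<le> r" "r \<le> 1" and c: "0 \<le> c" "c \<le> 1"
    and key: "(1 - p) + p * r * (1 - (1 - c) * (1 - pmf eta 0) * (1 - r)) \<le> r"
    and rule: "\<forall>k s. fst s \<noteq> {#} \<longrightarrow> rule k s \<in># fst s"
    and K: "nat K \<le> c * n"
  shows "prob_R_less eta p rule n K \<le> r"
proof -
  have "ennreal (prob_R_less eta p rule n K) \<le> emeasure (aux_law eta p rule n (nat K)) {(\<eta>, xs). length xs < nat K}"
    using prob_R_less_le_short[OF rule] by (simp add: measure_pmf.emeasure_eq_measure)
  also have "\<dots> = (\<integral>\<^sup>+y. extinction_prob eta p n rule ((\<lambda>_. 0)(0 := y)) 0 (nat K)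
      (replicate_mset (Suc y) 0, {0}) \<partial>eta)"
    by (rule emeasure_aux_law_short)
  also have "\<dots> \<le> ennreal (r ^ 1 * (1 - (1 - pmf eta 0) * (1 - r)))"
  proof (rule nn_integral_le_power_shift[OF r])
    have "0 \<le> 1 - c" "1 - c \<le> 1"
      using c by simp_all
    then show "extinction_prob eta p n rule ((\<lambda>_. 0)(0 := y)) 0 (nat K) (replicate_mset (Suc y) 0, {0})
        \<le> ennreal (r ^ (1 + y))" for y
      using extinction_prob_le[OF n p r _ _ key rule, of "replicate_mset (Suc y) 0" "{0}"] K
      by (simp add: algebra_simps)
  qed
  also have "\<dots> \<le> ennreal r"
    using r pmf_le_1[of eta 0] by (intro ennreal_leI) (simp add: mult_left_le mult_le_one)
  finally show ?thesis
    using r by simp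
qed

lemma eventually_drift_condition:
  fixes p :: "nat \<Rightarrow> real"
  assumes "p \<longlonglongrightarrow> 1" "0 < r" "r < 1" "0 < \<theta>" "0 < q"
  shows "\<forall>\<^sub>F n in sequentially. (1 - p n) + p n * r * (1 - \<theta> * q * (1 - r)) < r"
proof (rule order_tendstoD(2))
  show "(\<lambda>n. (1 - p n) + p n * r * (1 - \<theta> * q * (1 - r))) \<longlonglongrightarrow> (1 - 1) + 1 * r * (1 - \<theta> * q * (1 - r))"
    by (intro tendsto_intros assms(1))
  have "0 < r * (\<theta> * q * (1 - r))"
    using assms(2-5) by simp
  then show "(1 - 1) + 1 * r * (1 - \<theta> * q * (1 - r)) < r"
    by (simp add: algebra_simps)
qed

theorem lemma2p4:
  fixes eta :: "nat pmf" and p :: "nat \<Rightarrow> real" and c :: real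
    and rule :: "nat \<Rightarrow> nat \<Rightarrow> aux_state \<Rightarrow> nat"
  assumes "pmf eta 0 < 1"
    and "\<forall>n. 0 < p n \<and> p n \<le> 1"
    and "p \<longlonglongrightarrow> 1"
    and "0 < c" and "c < 1"
    and "\<forall>n k s. fst s \<noteq> {#} \<longrightarrow> rule n k s \<in># fst s"
  shows "(\<lambda>n. prob_R_less eta (p n) (rule n) n (\<lfloor>c * real n\<rfloor> - 1)) \<longlonglongrightarrow> 0"
proof (rule order_tendstoI)
  fix a :: real
  assume "a < 0"
  then show "\<forall>\<^sub>F n in sequentially. a < prob_R_less eta (p n) (rule n) n (\<lfloor>c * real n\<rfloor> - 1)"
    by (simp add: prob_R_less_def less_le_trans[OF _ measure_nonneg])
next
  fix a :: real
  assume "0 < a"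
  define r where "r = min (a / 2) (1 / 2)"
  have r: "0 < r" "r < 1" "r < a"
    using \<open>0 < a\<close> by (auto simp: r_def)
  have "\<forall>\<^sub>F n in sequentially. (1 - p n) + p n * r * (1 - (1 - c) * (1 - pmf eta 0) * (1 - r)) < r"
    using assms(1,3,5) r by (intro eventually_drift_condition) auto
  then show "\<forall>\<^sub>F n in sequentially. prob_R_less eta (p n) (rule n) n (\<lfloor>c * real n\<rfloor> - 1) < a"
    using eventually_ge_at_top[of 1]
  proof eventually_elim
    case (elim n)
    have "0 \<le> c * n"
      using assms(4) by simp
    then have "real (nat (\<lfloor>c * n\<rfloor> - 1)) \<le> c * n"
      by linarith
    then have "prob_R_less eta (p n) (rule n) n (\<lfloor>c * n\<rfloor> - 1) \<le> r"
      using elim assms(2,4,5,6) r by (intro prob_R_less_le) (auto simp: less_imp_le)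
    with r show ?case
      by simp
  qed
qed

end
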